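(* Let $n\in\omega$ and let $\mathcal{M}$ be a structure with exactly $n$ elements. Then ${\rm ar}({\rm Th}(\mathcal{M}))\leq n$.
   Context: All theories are complete first-order theories. For $n\geq 1$, a formula $\varphi(\overline{x})$ of a theory $T$ is $n$-ary if it is $T$-equivalent to a Boolean combination of $T$-formulas each of which has at most $n$ free variables; for $n=0$, $\varphi(\overline{x})$ is $0$-ary if it is $T$-equivalent to a sentence. A theory $T$ is unary ($1$-ary) if every $T$-formula is $T$-equivalent to a Boolean combination of $T$-formulas with one free variable and formulas of the form $x\approx y$; for $n\geq 2$, $T$ is $n$-ary if every $T$-formula is $n$-ary. The arity ${\rm ar}(T)$ is the natural number $n$ such that $T$ is $n$-ary and not $(n-1)$-ary; if $T$ is $n$-ary for no $n$, ${\rm ar}(T)=\infty$. *)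

theory Defs
  imports Main "HOL-Library.Extended_Nat"
begin

datatype 'f trm = Var nat | Fn 'f "'f trm list"

datatype ('f, 'r) fm =
    FBot
  | FEq "'f trm" "'f trm"
  | FRel 'r "'f trm list"
  | FNeg "('f, 'r) fm"
  | FConj "('f, 'r) fm" "('f, 'r) fm"
  | FEx nat "('f, 'r) fm"

fun fvt :: "'f trm \<Rightarrow> nat set" where
  "fvt (Var i) = {i}"
| "fvt (Fn f ts) = (\<Union>t\<in>set ts. fvt t)"

fun fv :: "('f, 'r) fm \<Rightarrow> nat set" where
  "fv FBot = {}"
| "fv (FEq s t) = fvt s \<union> fvt t"
| "fv (FRel r ts) = (\<Union>t\<in>set ts. fvt t)"
| "fv (FNeg p) = fv p"
| "fv (FConj p q) = fv p \<union> fv q"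
| "fv (FEx x p) = fv p - {x}"

record ('a, 'f, 'r) struct =
  univ :: "'a set"
  funs :: "'f \<Rightarrow> 'a list \<Rightarrow> 'a"
  rels :: "'r \<Rightarrow> 'a list \<Rightarrow> bool"

definition is_struct :: "('a, 'f, 'r) struct \<Rightarrow> bool" where
  "is_struct M \<longleftrightarrow> univ M \<noteq> {} \<and>
     (\<forall>f xs. set xs \<subseteq> univ M \<longrightarrow> funs M f xs \<in> univ M)"

fun evalt :: "('a, 'f, 'r) struct \<Rightarrow> (nat \<Rightarrow> 'a) \<Rightarrow> 'f trm \<Rightarrow> 'a" where
  "evalt M v (Var i) = v i"
| "evalt M v (Fn f ts) = funs M f (map (evalt M v) ts)"

fun sat :: "('a, 'f, 'r) struct \<Rightarrow> (nat \<Rightarrow> 'a) \<Rightarrow> ('f, 'r) fm \<Rightarrow> bool" where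
  "sat M v FBot = False"
| "sat M v (FEq s t) = (evalt M v s = evalt M v t)"
| "sat M v (FRel r ts) = rels M r (map (evalt M v) ts)"
| "sat M v (FNeg p) = (\<not> sat M v p)"
| "sat M v (FConj p q) = (sat M v p \<and> sat M v q)"
| "sat M v (FEx x p) = (\<exists>a\<in>univ M. sat M (v(x := a)) p)"

text \<open>Equivalence modulo the complete theory Th(M): Th(M) proves the universal closure
  of the biconditional iff the biconditional holds in M under every assignment.\<close>
definition th_equiv :: "('a, 'f, 'r) struct \<Rightarrow> ('f, 'r) fm \<Rightarrow> ('f, 'r) fm \<Rightarrow> bool" where
  "th_equiv M p q \<longleftrightarrow> (\<forall>v. range v \<subseteq> univ M \<longrightarrow> (sat M v p \<longleftrightarrow> sat M v q))"

inductive_set bcomb :: "('f, 'r) fm set \<Rightarrow> ('f, 'r) fm set" for S where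
  base: "p \<in> S \<Longrightarrow> p \<in> bcomb S"
| bot: "FBot \<in> bcomb S"
| neg: "p \<in> bcomb S \<Longrightarrow> FNeg p \<in> bcomb S"
| conj: "p \<in> bcomb S \<Longrightarrow> q \<in> bcomb S \<Longrightarrow> FConj p q \<in> bcomb S"

text \<open>Th(M) is n-ary. For n = 1 this is unariness; for n = 0 the notion is not defined for
  theories, so we set it to False (so that ar(T) = 1 iff T is unary).\<close>
definition th_nary :: "('a, 'f, 'r) struct \<Rightarrow> nat \<Rightarrow> bool" where
  "th_nary M n \<longleftrightarrow>
     (if n = 0 then False
      else if n = 1 then
        (\<forall>p. \<exists>q \<in> bcomb ({p. card (fv p) \<le> 1} \<union> {FEq (Var i) (Var j) | i j. True}).
               th_equiv M p q)
      else
        (\<forall>p. \<exists>q \<in> bcomb {p. card (fv p) \<le> n}. th_equiv M p q))"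

definition th_arity :: "('a, 'f, 'r) struct \<Rightarrow> enat" where
  "th_arity M = (if \<exists>n. th_nary M n
                 then enat (THE n. th_nary M n \<and> \<not> th_nary M (n - 1))
                 else \<infinity>)"

end

(* An assignment into an n-element structure must identify two of any n + 1 variables.
   Hence a formula p with more than n free variables is equivalent in M to the disjunction,
   over pairs i \<noteq> j of its free variables, of  x_i = x_j \<and> \<exists>x_j. (x_j = x_i \<and> p),  and the
   second conjunct has one free variable less.  Induction on the number of free variables
   makes every formula a Boolean combination of formulas with at most n free variables and
   of equations x_i = x_j, so Th(M) is n-ary; arity is monotone, so ar(Th(M)) \<le> n. *)
theory Submission
  imports Defs
begin

lemma finite_fvt [simp]: "finite (fvt t)"
  by (induction t) auto

lemma finite_fv [simp]: "finite (fv p)"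
  by (induction p) auto

lemma bcomb_mono: "p \<in> bcomb A \<Longrightarrow> A \<subseteq> B \<Longrightarrow> p \<in> bcomb B"
  by (induction rule: bcomb.induct) (auto intro: bcomb.intros)

lemma bcomb_finite_disjunction:
  assumes "finite I" and "\<And>i. i \<in> I \<Longrightarrow> \<phi> i \<in> bcomb S"
  shows "\<exists>\<psi>\<in>bcomb S. \<forall>v. sat M v \<psi> \<longleftrightarrow> (\<exists>i\<in>I. sat M v (\<phi> i))"
  using assms
proof (induction rule: finite_induct)
  case empty
  show ?case by (auto intro!: bexI[of _ FBot] bcomb.bot)
next
  case (insert i I)
  then obtain \<psi> where "\<psi> \<in> bcomb S" "\<forall>v. sat M v \<psi> \<longleftrightarrow> (\<exists>i\<in>I. sat M v (\<phi> i))"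
    by auto
  with insert.prems show ?case
    by (intro bexI[of _ "FNeg (FConj (FNeg (\<phi> i)) (FNeg \<psi>))"]) (auto intro: bcomb.intros)
qed

(* The substitution instance p[x_i/x_j], expressed without a substitution operation. *)
definition identify :: "nat \<Rightarrow> nat \<Rightarrow> ('f, 'r) fm \<Rightarrow> ('f, 'r) fm" where
  "identify i j p = FEx j (FConj (FEq (Var j) (Var i)) p)"

lemma fv_identify: "i \<in> fv p \<Longrightarrow> i \<noteq> j \<Longrightarrow> fv (identify i j p) = fv p - {j}"
  by (auto simp: identify_def)

lemma sat_identify:
  assumes "i \<noteq> j" and "v i \<in> univ M"
  shows "sat M v (identify i j p) \<longleftrightarrow> sat M (v(j := v i)) p"
  using assms by (auto simp: identify_def)

lemma sat_identify_if_eq: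
  assumes "i \<noteq> j" and "v i \<in> univ M" and "v i = v j"
  shows "sat M v (identify i j p) \<longleftrightarrow> sat M v p"
  using sat_identify[of i j v M p] assms by (metis fun_upd_triv)

lemma assignment_identifies_variables:
  assumes "finite (univ M)" and "range v \<subseteq> univ M"
    and "finite F" and "card (univ M) < card F"
  obtains i j where "i \<in> F" "j \<in> F" "i \<noteq> j" "v i = v j"
proof -
  have "card (v ` F) \<le> card (univ M)"
    using assms(1,2) by (intro card_mono) auto
  with assms(4) have "\<not> inj_on v F"
    by (intro pigeonhole) linarith
  then show ?thesis
    using that unfolding inj_on_def by blast
qed

lemma sat_iff_some_identification:
  assumes "finite (univ M)" and "range v \<subseteq> univ M" and "card (univ M) < card (fv p)"
  shows "sat M v p \<longleftrightarrow>
    (\<exists>i\<in>fv p. \<exists>j\<in>fv p. i \<noteq> j \<and> v i = v j \<and> sat M v (identify i j p))"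
    (is "_ \<longleftrightarrow> (\<exists>i\<in>fv p. \<exists>j\<in>fv p. ?identified i j)")
proof -
  have univ: "v i \<in> univ M" for i
    using assms(2) by auto
  show ?thesis
  proof
    assume "sat M v p"
    obtain i j where "i \<in> fv p" "j \<in> fv p" "i \<noteq> j" "v i = v j"
      using assignment_identifies_variables[OF assms(1,2) finite_fv assms(3)] .
    moreover from calculation \<open>sat M v p\<close> have "sat M v (identify i j p)"
      using univ[of i] sat_identify_if_eq[of i j v M p] by simp
    ultimately show "\<exists>i\<in>fv p. \<exists>j\<in>fv p. ?identified i j"
      by blast
  next
    assume "\<exists>i\<in>fv p. \<exists>j\<in>fv p. ?identified i j"
    then obtain i j where "?identified i j"
      by blast
    then show "sat M v p"
      using univ[of i] sat_identify_if_eq[of i j v M p] by simp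
  qed
qed

lemma bcomb_equiv_if_card_univ_le:
  assumes "finite (univ M)" and "card (univ M) \<le> n"
    and small: "\<And>p. card (fv p) \<le> n \<Longrightarrow> p \<in> S"
    and equations: "\<And>i j. FEq (Var i) (Var j) \<in> S"
  shows "\<exists>q\<in>bcomb S. th_equiv M p q"
proof (induction "card (fv p)" arbitrary: p rule: less_induct)
  case less
  show ?case
  proof (cases "card (fv p) \<le> n")
    case True
    then show ?thesis
      by (auto simp: th_equiv_def intro: bcomb.base small)
  next
    case False
    define I where "I = {(i, j). i \<in> fv p \<and> j \<in> fv p \<and> i \<noteq> j}"
    have "finite I"
      by (rule finite_subset[of _ "fv p \<times> fv p"]) (auto simp: I_def)
    have "\<exists>r\<in>bcomb S. th_equiv M (identify i j p) r" if "(i, j) \<in> I" for i j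
    proof (rule less)
      from that have "fv (identify i j p) = fv p - {j}" "j \<in> fv p"
        by (auto simp: I_def fv_identify)
      then show "card (fv (identify i j p)) < card (fv p)"
        by (metis card_Diff1_less finite_fv)
    qed
    then obtain R where R: "\<And>i j. (i, j) \<in> I \<Longrightarrow>
        R i j \<in> bcomb S \<and> th_equiv M (identify i j p) (R i j)"
      by metis
    define \<phi> where "\<phi> = (\<lambda>(i, j). FConj (FEq (Var i) (Var j)) (R i j))"
    obtain \<psi> where "\<psi> \<in> bcomb S" and \<psi>: "\<And>v. sat M v \<psi> \<longleftrightarrow> (\<exists>ij\<in>I. sat M v (\<phi> ij))"
      using bcomb_finite_disjunction[OF \<open>finite I\<close>, of \<phi> S M] R
      by (auto simp: \<phi>_def intro: bcomb.intros equations)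
    have "sat M v p \<longleftrightarrow> sat M v \<psi>" if "range v \<subseteq> univ M" for v
    proof -
      have "sat M v (R i j) \<longleftrightarrow> sat M v (identify i j p)" if "(i, j) \<in> I" for i j
        using R[OF that] \<open>range v \<subseteq> univ M\<close> by (auto simp: th_equiv_def)
      moreover have "card (univ M) < card (fv p)"
        using False assms(2) by linarith
      ultimately show ?thesis
        using sat_iff_some_identification[OF assms(1) that] by (auto simp: \<psi> \<phi>_def I_def)
    qed
    with \<open>\<psi> \<in> bcomb S\<close> show ?thesis
      by (auto simp: th_equiv_def)
  qed
qed

definition nary_basis :: "nat \<Rightarrow> ('f, 'r) fm set" where
  "nary_basis n =
     (if n = 1 then {p. card (fv p) \<le> 1} \<union> {FEq (Var i) (Var j) | i j. True}
      else {p. card (fv p) \<le> n})"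

lemma th_nary_iff_nary_basis:
  "th_nary M n \<longleftrightarrow> n \<noteq> 0 \<and> (\<forall>p. \<exists>q\<in>bcomb (nary_basis n). th_equiv M p q)"
  by (simp add: th_nary_def nary_basis_def)

lemma in_nary_basis_if_card_fv_le: "card (fv p) \<le> n \<Longrightarrow> p \<in> nary_basis n"
  by (simp add: nary_basis_def)

lemma Var_eq_in_nary_basis: "n \<noteq> 0 \<Longrightarrow> FEq (Var i) (Var j) \<in> nary_basis n"
  by (auto simp: nary_basis_def card_insert_if)

lemma nary_basis_mono: "m \<noteq> 0 \<Longrightarrow> m \<le> n \<Longrightarrow> nary_basis m \<subseteq> nary_basis n"
  by (auto simp: nary_basis_def card_insert_if)

lemma th_nary_mono:
  assumes "th_nary M m" and "m \<le> n"
  shows "th_nary M n"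
proof -
  have "m \<noteq> 0" and "\<forall>p. \<exists>q\<in>bcomb (nary_basis m). th_equiv M p q"
    using assms(1) unfolding th_nary_iff_nary_basis by blast+
  moreover have "nary_basis m \<subseteq> nary_basis n"
    using \<open>m \<noteq> 0\<close> assms(2) by (rule nary_basis_mono)
  ultimately have "\<forall>p. \<exists>q\<in>bcomb (nary_basis n). th_equiv M p q"
    using bcomb_mono by blast
  with \<open>m \<noteq> 0\<close> assms(2) show ?thesis
    unfolding th_nary_iff_nary_basis by simp
qed

lemma th_nary_pos: "th_nary M n \<Longrightarrow> n \<noteq> 0"
  by (simp add: th_nary_iff_nary_basis)

lemma th_arity_eq_Least:
  assumes "th_nary M n"
  shows "th_arity M = enat (LEAST k. th_nary M k)"
proof -
  define m where "m = (LEAST k. th_nary M k)"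
  have "th_nary M m"
    unfolding m_def using assms by (rule LeastI)
  moreover have "\<not> th_nary M (m - 1)"
    using th_nary_pos[OF \<open>th_nary M m\<close>] not_less_Least[of "m - 1" "th_nary M"]
    by (simp add: m_def)
  moreover have "k = m" if "th_nary M k" and "\<not> th_nary M (k - 1)" for k
  proof -
    have "m \<le> k"
      unfolding m_def using that(1) by (rule Least_le)
    moreover have "\<not> m \<le> k - 1"
      using th_nary_mono[OF \<open>th_nary M m\<close>] that(2) by blast
    ultimately show "k = m"
      by linarith
  qed
  ultimately have "(THE k. th_nary M k \<and> \<not> th_nary M (k - 1)) = m"
    by (intro the_equality) blast+
  with assms show ?thesis
    unfolding th_arity_def m_def by auto
qed

lemma th_arity_le: "th_nary M n \<Longrightarrow> th_arity M \<le> enat n"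
  by (simp add: th_arity_eq_Least Least_le)

lemma th_nary_card_univ:
  assumes "is_struct M" and "finite (univ M)"
  shows "th_nary M (card (univ M))"
proof -
  have nonempty: "card (univ M) \<noteq> 0"
    using assms by (simp add: is_struct_def)
  have "\<exists>q\<in>bcomb (nary_basis (card (univ M))). th_equiv M p q" for p
    by (rule bcomb_equiv_if_card_univ_le[OF assms(2) order_refl
          in_nary_basis_if_card_fv_le Var_eq_in_nary_basis[OF nonempty]])
  with nonempty show ?thesis
    by (simp add: th_nary_iff_nary_basis)
qed

theorem proposition1p4:
  fixes M :: "('a, 'f, 'r) struct" and n :: nat
  assumes "is_struct M"
    and "finite (univ M)"
    and "card (univ M) = n"
  shows "th_arity M \<le> enat n"
  using th_arity_le[OF th_nary_card_univ[OF assms(1,2)]] assms(3) by simp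

end
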